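(* A commuting triple $(N_1,N_2,N_3)$ of bounded operators is a $\mathbb P$-unitary if and only if both $(N_1,N_2,N_3)$ and $(N_1^*,N_2^*,N_3^* )$ are $\mathbb P$-isometries.
   Context: With $b\Gamma=\{(z_1+z_2,z_1z_2):|z_1|=|z_2|=1\}$ and pentablock $\mathbb P=\{(a_{21},\operatorname{tr}A_0,\det A_0): A_0=[a_{ij}]\in M_2(\mathbb C),\ \|A_0\|<1\}$ with distinguished boundary $b\mathbb P=\{(a,s,p):(s,p)\in b\Gamma,\ |a|^2+\frac14|s|^2=1\}$, a $\mathbb P$-unitary is a commuting triple of normal operators with Taylor joint spectrum in $b\mathbb P$, and a $\mathbb P$-isometry on $\mathcal H$ is the restriction to $\mathcal H$ of a $\mathbb P$-unitary on some $\mathcal K\supseteq\mathcal H$ for which $\mathcal H$ is a joint invariant subspace. *)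

theory Defs
  imports Complex_Main
begin

text \<open>The inner product is
linear in the second and conjugate-linear in the first argument.\<close>

class complex_vector = real_vector +
  fixes scaleC :: "complex \<Rightarrow> 'a \<Rightarrow> 'a"
  assumes scaleC_add_right: "scaleC a (x + y) = scaleC a x + scaleC a y"
    and scaleC_add_left: "scaleC (a + b) x = scaleC a x + scaleC b x"
    and scaleC_scaleC: "scaleC a (scaleC b x) = scaleC (a * b) x"
    and scaleC_one: "scaleC 1 x = x"
    and scaleR_scaleC: "scaleR r x = scaleC (complex_of_real r) x"

class complex_inner = complex_vector + real_normed_vector +
  fixes cinner :: "'a \<Rightarrow> 'a \<Rightarrow> complex"
  assumes cinner_commute: "cinner x y = cnj (cinner y x)"
    and cinner_add_left: "cinner (x + y) z = cinner x z + cinner y z"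
    and cinner_scaleC_left: "cinner (scaleC r x) y = cnj r * cinner x y"
    and cinner_real: "Im (cinner x x) = 0"
    and cinner_ge_zero: "0 \<le> Re (cinner x x)"
    and cinner_eq_zero_iff: "cinner x x = 0 \<longleftrightarrow> x = 0"
    and norm_eq_sqrt_cinner: "norm x = sqrt (Re (cinner x x))"

class chilbert_space = complex_inner + complete_space

definition bounded_clinear :: "('a::complex_inner \<Rightarrow> 'b::complex_inner) \<Rightarrow> bool" where
  "bounded_clinear T \<longleftrightarrow> bounded_linear T \<and> (\<forall>c x. T (scaleC c x) = scaleC c (T x))"

definition cadjoint :: "('a::complex_inner \<Rightarrow> 'b::complex_inner) \<Rightarrow> ('b \<Rightarrow> 'a)" where
  "cadjoint T = (THE S. \<forall>x y. cinner (T x) y = cinner x (S y))"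

definition normal_op :: "('a::complex_inner \<Rightarrow> 'a) \<Rightarrow> bool" where
  "normal_op T \<longleftrightarrow> T \<circ> cadjoint T = cadjoint T \<circ> T"

definition commuting_triple :: "('a \<Rightarrow> 'a) \<Rightarrow> ('a \<Rightarrow> 'a) \<Rightarrow> ('a \<Rightarrow> 'a) \<Rightarrow> bool" where
  "commuting_triple A1 A2 A3 \<longleftrightarrow>
     A1 \<circ> A2 = A2 \<circ> A1 \<and> A1 \<circ> A3 = A3 \<circ> A1 \<and> A2 \<circ> A3 = A3 \<circ> A2"

text \<open>Exactness of the Koszul complex
  0 -> H -> H^3 -> H^3 -> H -> 0 of a commuting triple (A1,A2,A3):
  d1 x = (A1 x, A2 x, A3 x),
  d2 (x1,x2,x3) = (A1 x2 - A2 x1, A1 x3 - A3 x1, A2 x3 - A3 x2),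
  d3 (y12,y13,y23) = A1 y23 - A2 y13 + A3 y12.\<close>

definition koszul_exact :: "('a::complex_inner \<Rightarrow> 'a) \<Rightarrow> ('a \<Rightarrow> 'a) \<Rightarrow> ('a \<Rightarrow> 'a) \<Rightarrow> bool" where
  "koszul_exact A1 A2 A3 \<longleftrightarrow>
     (\<forall>x. A1 x = 0 \<and> A2 x = 0 \<and> A3 x = 0 \<longrightarrow> x = 0) \<and>
     (\<forall>x1 x2 x3. A1 x2 - A2 x1 = 0 \<and> A1 x3 - A3 x1 = 0 \<and> A2 x3 - A3 x2 = 0 \<longrightarrow>
        (\<exists>x. x1 = A1 x \<and> x2 = A2 x \<and> x3 = A3 x)) \<and>
     (\<forall>y12 y13 y23. A1 y23 - A2 y13 + A3 y12 = 0 \<longrightarrow>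
        (\<exists>x1 x2 x3. y12 = A1 x2 - A2 x1 \<and> y13 = A1 x3 - A3 x1 \<and> y23 = A2 x3 - A3 x2)) \<and>
     (\<forall>y. \<exists>y12 y13 y23. y = A1 y23 - A2 y13 + A3 y12)"

definition taylor_spectrum ::
  "('a::complex_inner \<Rightarrow> 'a) \<Rightarrow> ('a \<Rightarrow> 'a) \<Rightarrow> ('a \<Rightarrow> 'a) \<Rightarrow> (complex \<times> complex \<times> complex) set" where
  "taylor_spectrum A1 A2 A3 =
     {(z1, z2, z3). \<not> koszul_exact (\<lambda>x. A1 x - scaleC z1 x) (\<lambda>x. A2 x - scaleC z2 x)
                                    (\<lambda>x. A3 x - scaleC z3 x)}"

definition bGamma :: "(complex \<times> complex) set" where
  "bGamma = {(z1 + z2, z1 * z2) | z1 z2. cmod z1 = 1 \<and> cmod z2 = 1}"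

definition bP :: "(complex \<times> complex \<times> complex) set" where
  "bP = {(a, s, p). (s, p) \<in> bGamma \<and> cmod a ^ 2 + (1/4) * cmod s ^ 2 = 1}"

definition P_unitary :: "('a::chilbert_space \<Rightarrow> 'a) \<Rightarrow> ('a \<Rightarrow> 'a) \<Rightarrow> ('a \<Rightarrow> 'a) \<Rightarrow> bool" where
  "P_unitary N1 N2 N3 \<longleftrightarrow>
     bounded_clinear N1 \<and> bounded_clinear N2 \<and> bounded_clinear N3 \<and>
     commuting_triple N1 N2 N3 \<and> normal_op N1 \<and> normal_op N2 \<and> normal_op N3 \<and>
     taylor_spectrum N1 N2 N3 \<subseteq> bP"

text \<open>(T1,T2,T3) on H is a P-isometry witnessed by a Hilbert space K of type 'b:
  H is identified with its image under an isometric complex-linear embedding V,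
  which is jointly invariant under a P-unitary (U1,U2,U3) on K whose restriction
  is (T1,T2,T3).\<close>

definition P_isometry_in ::
  "'b::chilbert_space itself \<Rightarrow> ('a::chilbert_space \<Rightarrow> 'a) \<Rightarrow> ('a \<Rightarrow> 'a) \<Rightarrow> ('a \<Rightarrow> 'a) \<Rightarrow> bool" where
  "P_isometry_in _ T1 T2 T3 \<longleftrightarrow>
     (\<exists>(V::'a \<Rightarrow> 'b) U1 U2 U3.
        bounded_clinear V \<and> (\<forall>x y. cinner (V x) (V y) = cinner x y) \<and>
        P_unitary U1 U2 U3 \<and>
        (\<forall>x. U1 (V x) = V (T1 x)) \<and> (\<forall>x. U2 (V x) = V (T2 x)) \<and> (\<forall>x. U3 (V x) = V (T3 x)))"

end

theory Submission
  imports Defs "HOL-Analysis.Analysis"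
begin

text \<open>A \<open>\<P>\<close>-unitary is trivially a \<open>\<P>\<close>-isometry, and so is its adjoint triple: normality and
commutation pass to adjoints, and the Taylor spectrum of \<open>(N\<^sub>1\<^sup>*, N\<^sub>2\<^sup>*, N\<^sub>3\<^sup>*)\<close> is the complex
conjugate of that of \<open>(N\<^sub>1, N\<^sub>2, N\<^sub>3)\<close>, because exactness of a Koszul complex passes to the
adjoint complex (its ranges are kernels, hence closed, and the closed range theorem applies), while
\<open>b\<P>\<close> is invariant under conjugation.

Conversely, if \<open>T\<close> and \<open>T\<^sup>*\<close> are both restrictions of normal operators to invariant subspaces,
then \<open>\<parallel>T\<^sup>* x\<parallel> \<le> \<parallel>T x\<parallel>\<close> and \<open>\<parallel>T x\<parallel> \<le> \<parallel>T\<^sup>* x\<parallel>\<close>, so \<open>T\<close> is normal; this applies to each \<open>N\<^sub>i\<close>. Then the invariant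
subspace of the \<open>\<P>\<close>-unitary extension \<open>U\<close> is reducing, so the Koszul complex of \<open>N - z\<close> is a
retract of that of \<open>U - z\<close>, and the Taylor spectrum of \<open>N\<close> lies in that of \<open>U\<close>, inside \<open>b\<P>\<close>.\<close>

context complex_vector
begin

lemma scaleC_zero_right [simp]: "scaleC a 0 = 0"
proof -
  have "scaleC a 0 + scaleC a 0 = scaleC a 0 + 0" by (simp add: scaleC_add_right[symmetric])
  then show ?thesis by simp
qed

lemma scaleC_zero_left [simp]: "scaleC 0 x = 0"
proof -
  have "scaleC 0 x + scaleC 0 x = scaleC 0 x + 0" by (simp add: scaleC_add_left[symmetric])
  then show ?thesis by simp
qed

lemma scaleC_minus_left: "scaleC (- a) x = - scaleC a x"
proof -
  have "scaleC (- a) x + scaleC a x = 0" by (simp flip: scaleC_add_left)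
  then show ?thesis by (simp only: eq_neg_iff_add_eq_0)
qed

lemma scaleC_minus_right: "scaleC a (- x) = - scaleC a x"
proof -
  have "scaleC a (- x) + scaleC a x = 0" by (simp flip: scaleC_add_right)
  then show ?thesis by (simp only: eq_neg_iff_add_eq_0)
qed

lemma scaleC_diff_right: "scaleC a (x - y) = scaleC a x - scaleC a y"
  by (simp only: diff_conv_add_uminus scaleC_add_right scaleC_minus_right)

end

lemma cinner_add_right: "cinner x (y + z) = cinner x y + cinner x z"
  by (subst (1 2 3) cinner_commute) (simp add: cinner_add_left)

lemma cinner_scaleC_right: "cinner x (scaleC r y) = r * cinner x y"
  by (subst (1 2) cinner_commute) (simp add: cinner_scaleC_left)

lemma cinner_zero_left [simp]: "cinner 0 x = 0"
proof -
  have "cinner 0 x + cinner 0 x = cinner 0 x + 0" by (simp add: cinner_add_left[symmetric])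
  then show ?thesis by simp
qed

lemma cinner_zero_right [simp]: "cinner x 0 = 0"
  by (subst cinner_commute) simp

lemma cinner_minus_left: "cinner (- x) y = - cinner x y"
proof -
  have "cinner (- x) y + cinner x y = 0" by (simp flip: cinner_add_left)
  then show ?thesis by (simp only: eq_neg_iff_add_eq_0)
qed

lemma cinner_minus_right: "cinner x (- y) = - cinner x y"
  by (subst (1 2) cinner_commute) (simp add: cinner_minus_left)

lemma cinner_diff_left: "cinner (x - y) z = cinner x z - cinner y z"
  by (simp only: diff_conv_add_uminus cinner_add_left cinner_minus_left)

lemma cinner_diff_right: "cinner x (y - z) = cinner x y - cinner x z"
  by (simp only: diff_conv_add_uminus cinner_add_right cinner_minus_right)

lemma cinner_self: "cinner x x = complex_of_real ((norm x)\<^sup>2)"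
proof -
  have "(norm x)\<^sup>2 = Re (cinner x x)" using norm_eq_sqrt_cinner[of x] cinner_ge_zero[of x] by simp
  then show ?thesis using cinner_real by (simp add: complex_eq_iff)
qed

lemma Re_cinner_self: "Re (cinner x x) = (norm x)\<^sup>2"
  by (simp add: cinner_self)

lemma cinner_eq_zero_all: "(\<And>y. cinner y x = 0) \<Longrightarrow> x = 0"
  using cinner_eq_zero_iff by blast

lemma cinner_ext_left: "(\<And>y. cinner x y = cinner z y) \<Longrightarrow> x = z"
  using cinner_eq_zero_iff[of "x - z"] by (simp add: cinner_diff_left)

lemma cinner_ext_right: "(\<And>y. cinner y x = cinner y z) \<Longrightarrow> x = z"
  using cinner_eq_zero_iff[of "x - z"] by (simp add: cinner_diff_right)

lemma norm_diff_sq: "(norm (x - y))\<^sup>2 = (norm x)\<^sup>2 + (norm y)\<^sup>2 - 2 * Re (cinner x y)"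
proof -
  have "cinner (x - y) (x - y) = cinner x x - cinner x y - cnj (cinner x y) + cinner y y"
    by (simp add: cinner_diff_left cinner_diff_right cinner_commute[of y x])
  then have "Re (cinner (x - y) (x - y)) = Re (cinner x x) + Re (cinner y y) - 2 * Re (cinner x y)"
    by simp
  then show ?thesis by (simp add: Re_cinner_self)
qed

lemma norm_add_sq: "(norm (x + y))\<^sup>2 = (norm x)\<^sup>2 + (norm y)\<^sup>2 + 2 * Re (cinner x y)"
  using norm_diff_sq[of x "- y"] by (simp add: cinner_minus_right)

lemma parallelogram_law:
  "(norm (x + y))\<^sup>2 + (norm (x - y))\<^sup>2 = 2 * (norm x)\<^sup>2 + 2 * (norm (y::'a::complex_inner))\<^sup>2"
  by (simp add: norm_add_sq norm_diff_sq)

lemma norm_scaleC [simp]: "norm (scaleC c (x::'a::complex_inner)) = cmod c * norm x"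
proof -
  have "cinner (scaleC c x) (scaleC c x) = (cnj c * c) * cinner x x"
    by (simp add: cinner_scaleC_left cinner_scaleC_right)
  also have "cnj c * c = complex_of_real ((cmod c)\<^sup>2)"
    using complex_norm_square[of c] by (simp add: mult.commute)
  finally have "Re (cinner (scaleC c x) (scaleC c x)) = (cmod c)\<^sup>2 * (norm x)\<^sup>2"
    by (simp add: cinner_self)
  then have "(norm (scaleC c x))\<^sup>2 = (cmod c * norm x)\<^sup>2"
    by (simp add: Re_cinner_self power_mult_distrib)
  then show ?thesis by (simp add: power2_eq_iff_nonneg)
qed

lemma Cauchy_Schwarz_cinner: "cmod (cinner x y) \<le> norm x * norm (y::'a::complex_inner)"
proof (cases "y = 0")
  case False
  then have ny: "norm y > 0" by simp
  define c where "c = cinner y x / complex_of_real ((norm y)\<^sup>2)"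
  have "cinner y (x - scaleC c y) = 0"
    using ny by (simp add: cinner_diff_right cinner_scaleC_right c_def cinner_self)
  then have orth: "cinner (x - scaleC c y) (scaleC c y) = 0"
    by (subst cinner_commute) (simp add: cinner_scaleC_left)
  have "(norm x)\<^sup>2 = (norm ((x - scaleC c y) + scaleC c y))\<^sup>2" by simp
  also have "\<dots> = (norm (x - scaleC c y))\<^sup>2 + (norm (scaleC c y))\<^sup>2"
    by (simp only: norm_add_sq orth) simp
  finally have "(norm (scaleC c y))\<^sup>2 \<le> (norm x)\<^sup>2" by simp
  moreover have "norm (scaleC c y) = cmod (cinner x y) / norm y"
    using ny by (simp add: c_def norm_divide power2_eq_square cinner_commute[of y x] norm_mult)
  ultimately have "cmod (cinner x y) / norm y \<le> norm x"
    using power2_le_imp_le by fastforce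
  then show ?thesis using ny by (simp add: divide_le_eq mult.commute)
qed simp

lemma Re_cinner_le_norm: "Re (cinner x y) \<le> norm x * norm (y::'a::complex_inner)"
  using complex_Re_le_cmod Cauchy_Schwarz_cinner order_trans by blast

section \<open>Orthogonal projection and Riesz representation\<close>

definition csubspace :: "'a::complex_vector set \<Rightarrow> bool" where
  "csubspace M \<longleftrightarrow> 0 \<in> M \<and> (\<forall>x\<in>M. \<forall>y\<in>M. x + y \<in> M) \<and> (\<forall>c. \<forall>x\<in>M. scaleC c x \<in> M)"

lemma csubspace_diff: "csubspace M \<Longrightarrow> x \<in> M \<Longrightarrow> y \<in> M \<Longrightarrow> x - y \<in> M"
  unfolding csubspace_def using scaleC_minus_left[of 1 y] by (metis diff_conv_add_uminus scaleC_one)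

lemma csubspace_UNIV: "csubspace UNIV"
  unfolding csubspace_def by simp

lemma near_minimizers_close:
  fixes x :: "'a::complex_inner"
  assumes M: "csubspace M" "a \<in> M" "b \<in> M" and d: "\<And>m. m \<in> M \<Longrightarrow> d \<le> norm (x - m)"
    and a: "norm (x - a) \<le> d + \<delta>" and b: "norm (x - b) \<le> d + \<delta>" and "0 \<le> d" "0 \<le> \<delta>"
  shows "(norm (a - b))\<^sup>2 \<le> 4 * \<delta> * (2 * d + \<delta>)"
proof -
  have "(1/2::real) *\<^sub>R (a + b) \<in> M" using M unfolding csubspace_def scaleR_scaleC by blast
  then have "2 * d \<le> 2 * norm (x - (1/2::real) *\<^sub>R (a + b))" using d by simp
  also have "\<dots> = norm (2 *\<^sub>R (x - (1/2::real) *\<^sub>R (a + b)))" by simp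
  also have "2 *\<^sub>R (x - (1/2::real) *\<^sub>R (a + b)) = (x - a) + (x - b)"
    by (simp add: algebra_simps scaleR_2)
  finally have "2 * d \<le> norm ((x - a) + (x - b))" .
  then have mid: "(2 * d)\<^sup>2 \<le> (norm ((x - a) + (x - b)))\<^sup>2"
    using \<open>0 \<le> d\<close> by (intro power_mono) simp_all
  have "(norm (a - b))\<^sup>2 = (norm ((x - a) - (x - b)))\<^sup>2"
    by (simp add: norm_minus_commute)
  also have "\<dots> = 2 * (norm (x - a))\<^sup>2 + 2 * (norm (x - b))\<^sup>2 - (norm ((x - a) + (x - b)))\<^sup>2"
    using parallelogram_law[of "x - a" "x - b"] by linarith
  also have "\<dots> \<le> 4 * (d + \<delta>)\<^sup>2 - (2 * d)\<^sup>2"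
    using mid power_mono[OF a, of 2] power_mono[OF b, of 2] by simp
  also have "\<dots> = 4 * \<delta> * (2 * d + \<delta>)" by (simp add: power2_eq_square algebra_simps)
  finally show ?thesis .
qed

lemma minimizing_sequence_Cauchy:
  fixes x :: "'a::complex_inner"
  assumes M: "csubspace M" and mM: "\<And>n. m n \<in> M" and dle: "\<And>y. y \<in> M \<Longrightarrow> d \<le> norm (x - y)"
    and d0: "0 \<le> d" and mless: "\<And>n. norm (x - m n) < d + inverse (real (Suc n))"
  shows "Cauchy m"
proof (rule metric_CauchyI)
  fix e :: real assume e: "0 < e"
  then obtain N where N: "inverse (real (Suc N)) < e\<^sup>2 / (4 * (2 * d + 1))"
    using d0 reals_Archimedean[of "e\<^sup>2 / (4 * (2 * d + 1))"] by auto
  have "dist (m j) (m k) < e" if "j \<ge> N" "k \<ge> N" for j k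
  proof -
    define \<delta> where "\<delta> = inverse (real (Suc N))"
    have "0 < \<delta>" "\<delta> \<le> 1" unfolding \<delta>_def by (auto simp: inverse_le_1_iff)
    have "inverse (real (Suc j)) \<le> \<delta>" "inverse (real (Suc k)) \<le> \<delta>"
      unfolding \<delta>_def using that by (auto intro!: le_imp_inverse_le)
    then have "(norm (m j - m k))\<^sup>2 \<le> 4 * \<delta> * (2 * d + \<delta>)"
      using mless[of j] mless[of k] \<open>0 < \<delta>\<close> d0
      by (intro near_minimizers_close[OF M mM mM dle]) auto
    also have "\<dots> \<le> 4 * \<delta> * (2 * d + 1)"
      using \<open>0 < \<delta>\<close> \<open>\<delta> \<le> 1\<close> by simp
    also have "\<dots> < e\<^sup>2" using N d0 unfolding \<delta>_def by (simp add: field_simps)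
    finally show ?thesis using e by (simp add: dist_norm power_less_imp_less_base)
  qed
  then show "\<exists>M. \<forall>j\<ge>M. \<forall>k\<ge>M. dist (m j) (m k) < e" by blast
qed

lemma nearest_point_exists:
  fixes x :: "'a::chilbert_space"
  assumes cl: "closed M" and M: "csubspace M"
  shows "\<exists>p\<in>M. \<forall>m\<in>M. norm (x - p) \<le> norm (x - m)"
proof -
  have "M \<noteq> {}" using M unfolding csubspace_def by auto
  define d where "d = infdist x M"
  have d0: "0 \<le> d" unfolding d_def by (rule infdist_nonneg)
  have dle: "\<And>m. m \<in> M \<Longrightarrow> d \<le> norm (x - m)"
    unfolding d_def by (metis dist_norm infdist_le)
  have "\<exists>m\<in>M. norm (x - m) < d + inverse (real (Suc n))" for n
    using \<open>M \<noteq> {}\<close> cINF_less_iff[OF \<open>M \<noteq> {}\<close> bdd_below_image_dist, of x "d + inverse (real (Suc n))"]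
    by (auto simp: d_def infdist_notempty dist_norm)
  then obtain m where mM: "\<And>n. m n \<in> M"
    and mless: "\<And>n. norm (x - m n) < d + inverse (real (Suc n))"
    by metis
  then obtain p where mp: "m \<longlonglongrightarrow> p"
    using minimizing_sequence_Cauchy[OF M mM dle d0 mless] convergent_eq_Cauchy by blast
  have pM: "p \<in> M" using closed_sequentially[OF cl] mM mp by blast
  have "(\<lambda>n. d + inverse (real (Suc n)) + norm (m n - p)) \<longlonglongrightarrow> d + 0 + 0"
    using mp by (intro tendsto_intros LIMSEQ_inverse_real_of_nat tendsto_norm_zero) (simp add: LIM_zero)
  moreover have "norm (x - p) \<le> d + inverse (real (Suc n)) + norm (m n - p)" for n
    using norm_triangle_ineq[of "x - m n" "m n - p"] mless[of n] by simp
  ultimately have "norm (x - p) \<le> d"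
    by (intro LIMSEQ_le_const) auto
  then show ?thesis
    using pM dle by (meson order.trans)
qed

lemma nearest_point_orthogonal:
  fixes x :: "'a::complex_inner"
  assumes M: "csubspace M" and p: "p \<in> M" and near: "\<And>m. m \<in> M \<Longrightarrow> norm (x - p) \<le> norm (x - m)"
    and u: "u \<in> M"
  shows "cinner u (x - p) = 0"
proof -
  define e where "e = x - p"
  define w where "w = cinner u e"
  define t where "t = 1 / ((norm u)\<^sup>2 + 1)"
  have t0: "0 < t" unfolding t_def by (simp add: add_nonneg_pos)
  have "p + scaleC (complex_of_real t * w) u \<in> M" using M p u unfolding csubspace_def by blast
  then have "norm e \<le> norm (e - scaleC (complex_of_real t * w) u)"
    using near unfolding e_def by (simp add: algebra_simps)
  then have "(norm e)\<^sup>2 \<le> (norm (e - scaleC (complex_of_real t * w) u))\<^sup>2" by (simp add: power_mono)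
  also have "\<dots> = (norm e)\<^sup>2 + (t * cmod w)\<^sup>2 * (norm u)\<^sup>2 - 2 * (t * (cmod w)\<^sup>2)"
  proof -
    have "cinner e u = cnj w" unfolding w_def by (subst cinner_commute) simp
    moreover have "w * cnj w = complex_of_real ((cmod w)\<^sup>2)" by (rule complex_norm_square[symmetric])
    ultimately have "cinner e (scaleC (complex_of_real t * w) u) = complex_of_real (t * (cmod w)\<^sup>2)"
      by (simp add: cinner_scaleC_right mult.assoc)
    then show ?thesis
      by (simp add: norm_diff_sq norm_mult power_mult_distrib abs_of_pos[OF t0])
  qed
  finally have "2 * (cmod w)\<^sup>2 \<le> t * (norm u)\<^sup>2 * (cmod w)\<^sup>2"
    using t0 by (simp add: power2_eq_square algebra_simps)
  also have "\<dots> \<le> (cmod w)\<^sup>2"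
    using mult_right_mono[of "t * (norm u)\<^sup>2" 1 "(cmod w)\<^sup>2"]
    unfolding t_def by (simp add: divide_le_eq_1 add_nonneg_pos)
  finally show ?thesis unfolding w_def e_def by simp
qed

lemma orthogonal_projection_exists:
  fixes x :: "'a::chilbert_space"
  assumes "closed M" and "csubspace M"
  shows "\<exists>p\<in>M. \<forall>m\<in>M. cinner m (x - p) = 0"
  using nearest_point_exists[OF assms] nearest_point_orthogonal[OF assms(2)] by metis

lemma closed_kernel_bounded_functional:
  fixes \<phi> :: "'a::complex_inner \<Rightarrow> complex"
  assumes cl: "closed S" and S: "csubspace S"
    and add: "\<And>x y. x \<in> S \<Longrightarrow> y \<in> S \<Longrightarrow> \<phi> (x + y) = \<phi> x + \<phi> y"
    and bnd: "\<And>x. x \<in> S \<Longrightarrow> cmod (\<phi> x) \<le> B * norm x"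
  shows "closed {z \<in> S. \<phi> z = 0}"
proof -
  have diff: "\<phi> x' - \<phi> x = \<phi> (x' - x)" if "x \<in> S" "x' \<in> S" for x x'
    using add[of "x' - x" x] csubspace_diff[OF S that(2,1)] that by simp
  have "continuous_on S \<phi>"
    unfolding continuous_on_iff
  proof (intro ballI allI impI)
    fix x e assume x: "x \<in> S" and e: "(0::real) < e"
    show "\<exists>d>0. \<forall>x'\<in>S. dist x' x < d \<longrightarrow> dist (\<phi> x') (\<phi> x) < e"
    proof (intro exI[of _ "e / (\<bar>B\<bar> + 1)"] conjI ballI impI)
      show "0 < e / (\<bar>B\<bar> + 1)" using e by (simp add: add_nonneg_pos)
    next
      fix x' assume x': "x' \<in> S" and "dist x' x < e / (\<bar>B\<bar> + 1)"
      then have "(\<bar>B\<bar> + 1) * norm (x' - x) < e"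
        by (simp add: dist_norm field_simps add_nonneg_pos)
      moreover have "B * norm (x' - x) \<le> (\<bar>B\<bar> + 1) * norm (x' - x)"
        by (intro mult_right_mono) auto
      ultimately show "dist (\<phi> x') (\<phi> x) < e"
        using bnd[OF csubspace_diff[OF S x' x]] diff[OF x x'] by (simp add: dist_norm)
    qed
  qed
  then have "closed (S \<inter> \<phi> -` {0})" using continuous_closed_preimage[OF _ cl] by blast
  then show ?thesis by (simp add: vimage_def Int_def)
qed

lemma Riesz_representation_csubspace:
  fixes \<phi> :: "'a::chilbert_space \<Rightarrow> complex"
  assumes cl: "closed S" and S: "csubspace S"
    and add: "\<And>x y. x \<in> S \<Longrightarrow> y \<in> S \<Longrightarrow> \<phi> (x + y) = \<phi> x + \<phi> y"
    and sc: "\<And>c x. x \<in> S \<Longrightarrow> \<phi> (scaleC c x) = c * \<phi> x"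
    and bnd: "\<And>x. x \<in> S \<Longrightarrow> cmod (\<phi> x) \<le> B * norm x"
  shows "\<exists>w\<in>S. \<forall>z\<in>S. \<phi> z = cinner w z"
proof (cases "\<forall>z\<in>S. \<phi> z = 0")
  case True
  moreover have "0 \<in> S" using S unfolding csubspace_def by auto
  ultimately show ?thesis by (intro bexI[of _ 0]) auto
next
  case False
  then obtain x0 where x0S: "x0 \<in> S" and fx0: "\<phi> x0 \<noteq> 0" by blast
  have Ssc: "\<And>c a. a \<in> S \<Longrightarrow> scaleC c a \<in> S" using S unfolding csubspace_def by auto
  have diff: "\<phi> (a - b) = \<phi> a - \<phi> b" if "a \<in> S" "b \<in> S" for a b
    using add[OF csubspace_diff[OF S that] that(2)] by simp
  define K where "K = {z \<in> S. \<phi> z = 0}"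
  have "closed K" unfolding K_def by (rule closed_kernel_bounded_functional[OF cl S add bnd])
  moreover have "csubspace K"
    using S sc[of _ 0] add sc unfolding csubspace_def K_def by auto
  ultimately obtain p where pK: "p \<in> K" and orth: "\<And>m. m \<in> K \<Longrightarrow> cinner m (x0 - p) = 0"
    using orthogonal_projection_exists by blast
  define z0 where "z0 = x0 - p"
  have z0S: "z0 \<in> S" and fz0: "\<phi> z0 = \<phi> x0"
    using pK diff[OF x0S] csubspace_diff[OF S x0S] unfolding z0_def K_def by auto
  then have "z0 \<noteq> 0" using fx0 sc[of 0 0] S unfolding csubspace_def by auto
  show ?thesis
  proof (intro bexI[of _ "scaleC (cnj (\<phi> z0) / complex_of_real ((norm z0)\<^sup>2)) z0"] ballI)
    fix z assume zS: "z \<in> S"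
    \<comment> \<open>\<open>z\<close> minus the right multiple of \<open>z0\<close> lies in the kernel, to which \<open>z0\<close> is orthogonal\<close>
    define v where "v = z - scaleC (\<phi> z / \<phi> z0) z0"
    have "v \<in> K"
      using diff[OF zS Ssc[OF z0S]] sc[OF z0S] fz0 fx0 csubspace_diff[OF S zS Ssc[OF z0S]]
      unfolding v_def K_def by simp
    then have "cinner z0 v = 0" using orth unfolding z0_def by (metis cinner_commute complex_cnj_zero)
    then have "cinner z0 z = (\<phi> z / \<phi> z0) * complex_of_real ((norm z0)\<^sup>2)"
      unfolding v_def by (simp add: cinner_diff_right cinner_scaleC_right cinner_self)
    then show "\<phi> z = cinner (scaleC (cnj (\<phi> z0) / complex_of_real ((norm z0)\<^sup>2)) z0) z"
      using \<open>z0 \<noteq> 0\<close> fz0 fx0 by (simp add: cinner_scaleC_left field_simps)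
  qed (use Ssc z0S in blast)
qed

lemma bounded_clinear_add: "bounded_clinear T \<Longrightarrow> T (x + y) = T x + T y"
  unfolding bounded_clinear_def by (simp add: linear_simps)

lemma bounded_clinear_diff: "bounded_clinear T \<Longrightarrow> T (x - y) = T x - T y"
  unfolding bounded_clinear_def by (simp add: linear_simps)

lemma bounded_clinear_minus: "bounded_clinear T \<Longrightarrow> T (- x) = - T x"
  unfolding bounded_clinear_def by (simp add: linear_simps)

lemma bounded_clinear_zero: "bounded_clinear T \<Longrightarrow> T 0 = 0"
  unfolding bounded_clinear_def by (simp add: linear_simps)

lemma bounded_clinear_scaleC: "bounded_clinear T \<Longrightarrow> T (scaleC c x) = scaleC c (T x)"
  unfolding bounded_clinear_def by simp

lemma bounded_clinear_bounded: "bounded_clinear T \<Longrightarrow> \<exists>K>0. \<forall>x. norm (T x) \<le> norm x * K"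
  unfolding bounded_clinear_def using bounded_linear.pos_bounded by blast

lemma bounded_clinear_intro:
  assumes "\<And>x y. T (x + y) = T x + T y" and "\<And>c x. T (scaleC c x) = scaleC c (T x)"
    and "\<And>x. norm (T x) \<le> norm x * K"
  shows "bounded_clinear T"
  unfolding bounded_clinear_def
  using bounded_linear_intro[OF assms(1) _ assms(3)] by (simp add: scaleR_scaleC assms(2))

lemma bounded_clinear_id: "bounded_clinear id"
  by (rule bounded_clinear_intro[where K = 1]) auto

lemma bounded_clinear_shift:
  assumes "bounded_clinear N"
  shows "bounded_clinear (\<lambda>x. N x - scaleC z x)"
proof -
  obtain K where K: "\<And>x. norm (N x) \<le> norm x * K" using bounded_clinear_bounded[OF assms] by blast
  show ?thesis
  proof (rule bounded_clinear_intro[where K = "K + cmod z"])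
    fix x
    have "norm (N x - scaleC z x) \<le> norm (N x) + norm (scaleC z x)" by (rule norm_triangle_ineq4)
    also have "\<dots> \<le> norm x * (K + cmod z)" using K[of x] by (simp add: algebra_simps)
    finally show "norm (N x - scaleC z x) \<le> norm x * (K + cmod z)" .
  qed (simp_all add: bounded_clinear_add[OF assms] bounded_clinear_scaleC[OF assms] scaleC_add_right
      scaleC_diff_right scaleC_scaleC mult.commute)
qed

lemma cadjoint_exists:
  fixes T :: "'a::chilbert_space \<Rightarrow> 'b::chilbert_space"
  assumes T: "bounded_clinear T"
  shows "\<exists>S. \<forall>x y. cinner (T x) y = cinner x (S y)"
proof -
  obtain K where K: "\<And>x. norm (T x) \<le> norm x * K" using bounded_clinear_bounded[OF T] by blast
  have "\<exists>w. \<forall>x. cinner (T x) y = cinner x w" for y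
  proof -
    have "\<exists>w\<in>UNIV. \<forall>z\<in>UNIV. cinner y (T z) = cinner w z"
    proof (rule Riesz_representation_csubspace[OF closed_UNIV csubspace_UNIV, where B = "norm y * K"])
      fix a
      have "cmod (cinner y (T a)) \<le> norm y * norm (T a)" by (rule Cauchy_Schwarz_cinner)
      also have "\<dots> \<le> norm y * (norm a * K)" using K[of a] by (simp add: mult_left_mono)
      finally show "cmod (cinner y (T a)) \<le> norm y * K * norm a" by (simp only: mult_ac)
    qed (simp_all add: bounded_clinear_add[OF T] bounded_clinear_scaleC[OF T] cinner_add_right
        cinner_scaleC_right)
    then show ?thesis by (metis UNIV_I cinner_commute)
  qed
  then show ?thesis by metis
qed

lemma cadjoint_eq:
  assumes "\<And>x y. cinner (T x) y = cinner x (S y)"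
  shows "cadjoint T = S"
  unfolding cadjoint_def
proof (rule the_equality)
  fix S' assume "\<forall>x y. cinner (T x) y = cinner x (S' y)"
  then show "S' = S" by (metis assms cinner_ext_right ext)
qed (use assms in blast)

lemma cinner_cadjoint_right:
  fixes T :: "'a::chilbert_space \<Rightarrow> 'b::chilbert_space"
  assumes "bounded_clinear T"
  shows "cinner (T x) y = cinner x (cadjoint T y)"
  using cadjoint_exists[OF assms] cadjoint_eq[of T] by metis

lemma cinner_cadjoint_left:
  fixes T :: "'a::chilbert_space \<Rightarrow> 'b::chilbert_space"
  assumes "bounded_clinear T"
  shows "cinner (cadjoint T y) x = cinner y (T x)"
  by (subst (1 2) cinner_commute) (simp add: cinner_cadjoint_right[OF assms])

lemma bounded_clinear_cadjoint:
  fixes T :: "'a::chilbert_space \<Rightarrow> 'b::chilbert_space"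
  assumes T: "bounded_clinear T"
  shows "bounded_clinear (cadjoint T)"
proof -
  obtain K where K0: "K > 0" and K: "\<And>x. norm (T x) \<le> norm x * K"
    using bounded_clinear_bounded[OF T] by blast
  let ?S = "cadjoint T"
  show ?thesis
  proof (rule bounded_clinear_intro[where K = K])
    fix y
    have "(norm (?S y))\<^sup>2 = Re (cinner (T (?S y)) y)"
      by (simp add: cinner_cadjoint_right[OF T] flip: Re_cinner_self)
    also have "\<dots> \<le> norm (T (?S y)) * norm y" by (rule Re_cinner_le_norm)
    also have "\<dots> \<le> norm (?S y) * K * norm y" using K by (simp add: mult_right_mono)
    also have "\<dots> = norm (?S y) * (norm y * K)" by (simp only: mult_ac)
    finally show "norm (?S y) \<le> norm y * K" using K0
      by (cases "norm (?S y) = 0") (auto simp: power2_eq_square)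
  qed (auto intro: cinner_ext_right simp: cinner_cadjoint_right[OF T, symmetric] cinner_add_right
      cinner_scaleC_right)
qed

lemma cadjoint_cadjoint:
  fixes T :: "'a::chilbert_space \<Rightarrow> 'b::chilbert_space"
  assumes "bounded_clinear T"
  shows "cadjoint (cadjoint T) = T"
  by (rule cadjoint_eq) (simp add: cinner_cadjoint_left[OF assms])

lemma cadjoint_comp:
  fixes S :: "'b::chilbert_space \<Rightarrow> 'c::chilbert_space" and T :: "'a::chilbert_space \<Rightarrow> 'b"
  assumes "bounded_clinear S" and "bounded_clinear T"
  shows "cadjoint (S \<circ> T) = cadjoint T \<circ> cadjoint S"
  by (rule cadjoint_eq) (simp add: cinner_cadjoint_right[OF assms(1)] cinner_cadjoint_right[OF assms(2)])

lemma cadjoint_shift: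
  fixes N :: "'a::chilbert_space \<Rightarrow> 'a"
  assumes "bounded_clinear N"
  shows "cadjoint (\<lambda>x. N x - scaleC z x) = (\<lambda>x. cadjoint N x - scaleC (cnj z) x)"
  by (rule cadjoint_eq)
    (simp add: cinner_diff_left cinner_diff_right cinner_scaleC_left cinner_scaleC_right
      cinner_cadjoint_right[OF assms])

lemma cadjoint_surj_injective:
  fixes T :: "'a::chilbert_space \<Rightarrow> 'b::chilbert_space"
  assumes "bounded_clinear T" and "surj T" and "cadjoint T y = 0"
  shows "y = 0"
  by (metis assms cinner_cadjoint_right cinner_eq_zero_all cinner_zero_right surjD)

section \<open>Operators with closed range\<close>

lemma closed_range_Baire:
  fixes f :: "'a::banach \<Rightarrow> 'b::banach"
  assumes lin: "bounded_linear f" and cl: "closed (range f)"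
  shows "\<exists>n::nat. \<exists>y0 r. r > 0 \<and> y0 \<in> range f \<and>
           (\<forall>y\<in>range f. dist y y0 < r \<longrightarrow> y \<in> closure (f ` cball 0 (real n)))"
proof -
  define X where "X = top_of_set (range f)"
  define F where "F n = range f \<inter> closure (f ` cball 0 (real n))" for n
  have "completely_metrizable_space X"
    unfolding X_def using cl
    by (intro completely_metrizable_space_closedin completely_metrizable_space_euclidean) simp
  have "\<exists>n. X interior_of F n \<noteq> {}"
  proof (rule ccontr)
    assume "\<nexists>n. X interior_of F n \<noteq> {}"
    then have "X interior_of \<Union>(range F) = {}"
      using \<open>completely_metrizable_space X\<close>
      by (intro Baire_category_alt) (auto simp: X_def F_def closedin_closed_Int)
    moreover have "\<Union>(range F) = range f"
    proof (intro equalityI subsetI)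
      fix y assume "y \<in> range f"
      then obtain x where y: "y = f x" by blast
      obtain n :: nat where "norm x \<le> real n" using real_arch_simple by blast
      then have "y \<in> F n" using y closure_subset unfolding F_def by fastforce
      then show "y \<in> \<Union>(range F)" by blast
    qed (auto simp: F_def)
    moreover have "f 0 \<in> range f" by blast
    ultimately show False using interior_of_topspace[of X] unfolding X_def by simp
  qed
  then obtain n y0 where "y0 \<in> X interior_of F n" by blast
  then obtain U where U: "openin X U" "y0 \<in> U" "U \<subseteq> F n" unfolding interior_of_def by blast
  then obtain T where T: "open T" "U = range f \<inter> T" using openin_open unfolding X_def by blast
  then obtain r where r: "r > 0" "ball y0 r \<subseteq> T" using U(2) open_contains_ball by blast
  have "y \<in> closure (f ` cball 0 (real n))" if "y \<in> range f" "dist y y0 < r" for y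
  proof -
    have "y \<in> T" using r(2) that(2) by (auto simp: dist_commute)
    then show ?thesis using that(1) T(2) U(3) unfolding F_def by blast
  qed
  then show ?thesis using r(1) U(2) T(2) by blast
qed

lemma closed_range_approximate_preimage_ball:
  fixes f :: "'a::banach \<Rightarrow> 'b::banach"
  assumes lin: "bounded_linear f" and cl: "closed (range f)"
  shows "\<exists>r C. r > 0 \<and>
           (\<forall>y\<in>range f. norm y < r \<longrightarrow> (\<forall>e>0. \<exists>x. norm x \<le> C \<and> norm (f x - y) < e))"
proof -
  interpret f: bounded_linear f by (rule lin)
  obtain n :: nat and y0 r where r: "r > 0" and y0: "y0 \<in> range f"
    and B: "\<And>y. y \<in> range f \<Longrightarrow> dist y y0 < r \<Longrightarrow> y \<in> closure (f ` cball 0 (real n))"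
    using closed_range_Baire[OF lin cl] by blast
  have approx: "\<exists>x. norm x \<le> real n \<and> norm (f x - z) < e"
    if z: "z \<in> closure (f ` cball 0 (real n))" and e: "e > 0" for z e
  proof -
    have "\<forall>\<epsilon>>0. \<exists>u\<in>f ` cball 0 (real n). dist u z < \<epsilon>"
      using z by (simp only: closure_approachable)
    then obtain u where "u \<in> f ` cball 0 (real n)" "dist u z < e"
      using e by blast
    then show ?thesis by (auto simp: dist_norm)
  qed
  \<comment> \<open>approximate \<open>y0 + y\<close> and \<open>y0\<close> separately and subtract\<close>
  have "\<exists>x. norm x \<le> 2 * real n \<and> norm (f x - y) < e"
    if y: "y \<in> range f" "norm y < r" and e: "e > 0" for y e
  proof -
    obtain a b where "y = f a" "y0 = f b" using y(1) y0 by blast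
    then have "y0 + y \<in> range f" by (simp add: range_eqI[of _ f "b + a"] f.add)
    then have "y0 + y \<in> closure (f ` cball 0 (real n))" using B y(2) by (simp add: dist_norm)
    then obtain x1 where x1: "norm x1 \<le> real n" "norm (f x1 - (y0 + y)) < e / 2"
      using approx[OF _ half_gt_zero[OF e]] by blast
    have "y0 \<in> closure (f ` cball 0 (real n))" using B[OF y0] r by simp
    then obtain x2 where x2: "norm x2 \<le> real n" "norm (f x2 - y0) < e / 2"
      using approx[OF _ half_gt_zero[OF e]] by blast
    have "norm (f (x1 - x2) - y) \<le> norm (f x1 - (y0 + y)) + norm (f x2 - y0)"
      using norm_triangle_ineq4[of "f x1 - (y0 + y)" "f x2 - y0"] by (simp add: f.diff algebra_simps)
    moreover have "norm (x1 - x2) \<le> 2 * real n"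
      using norm_triangle_ineq4[of x1 x2] x1(1) x2(1) by linarith
    ultimately show ?thesis using x1(2) x2(2) by (intro exI[of _ "x1 - x2"]) simp
  qed
  then show ?thesis using r by blast
qed

lemma closed_range_approximate_preimage:
  fixes f :: "'a::banach \<Rightarrow> 'b::banach"
  assumes lin: "bounded_linear f" and cl: "closed (range f)"
  shows "\<exists>K>0. \<forall>y\<in>range f. \<forall>e>0. \<exists>x. norm x \<le> K * norm y \<and> norm (f x - y) < e"
proof -
  interpret f: bounded_linear f by (rule lin)
  obtain r C where r: "r > 0"
    and small: "\<And>y e. y \<in> range f \<Longrightarrow> norm y < r \<Longrightarrow> e > 0 \<Longrightarrow> \<exists>x. norm x \<le> C \<and> norm (f x - y) < e"
    using closed_range_approximate_preimage_ball[OF lin cl] by blast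
  define K where "K = 2 * \<bar>C\<bar> / r + 1"
  have "\<exists>x. norm x \<le> K * norm y \<and> norm (f x - y) < e" if y: "y \<in> range f" and e: "e > 0" for y e
  proof (cases "y = 0")
    case False
    define c where "c = r / (2 * norm y)"
    have c0: "c > 0" using r False by (simp add: c_def)
    have "c *\<^sub>R y \<in> range f" using y by (metis f.scaleR rangeE range_eqI)
    moreover have "norm (c *\<^sub>R y) < r" using r False by (simp add: c_def)
    ultimately obtain x' where x': "norm x' \<le> C" "norm (f x' - c *\<^sub>R y) < e * c"
      using small c0 e by (meson mult_pos_pos)
    have "f ((1 / c) *\<^sub>R x') - y = (1 / c) *\<^sub>R (f x' - c *\<^sub>R y)"
      using c0 by (simp add: f.scaleR scaleR_diff_right)
    then have "norm (f ((1 / c) *\<^sub>R x') - y) = norm (f x' - c *\<^sub>R y) / c"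
      using c0 by simp
    also have "\<dots> < e" using x'(2) c0 by (simp add: divide_less_eq)
    finally have "norm (f ((1 / c) *\<^sub>R x') - y) < e" .
    moreover have "norm ((1 / c) *\<^sub>R x') \<le> K * norm y"
    proof -
      have "norm ((1 / c) *\<^sub>R x') \<le> \<bar>C\<bar> / c" using x'(1) c0 by (simp add: divide_right_mono)
      also have "\<dots> = 2 * \<bar>C\<bar> / r * norm y" using r False by (simp add: c_def field_simps)
      also have "\<dots> \<le> K * norm y" by (intro mult_right_mono) (simp_all add: K_def)
      finally show ?thesis .
    qed
    ultimately show ?thesis by blast
  qed (use e in \<open>auto intro: exI[of _ 0]\<close>)
  moreover have "K > 0" using r by (simp add: K_def add_nonneg_pos)
  ultimately show ?thesis by blast
qed

lemma summable_geometric_half_bound: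
  fixes xs :: "nat \<Rightarrow> 'a::banach"
  assumes xs: "\<And>k. norm (xs k) \<le> c * (1/2) ^ k"
  shows "summable xs" and "norm (suminf xs) \<le> 2 * c"
proof -
  have geo: "summable (\<lambda>k. c * (1/2::real) ^ k)"
    by (intro summable_mult summable_geometric) simp
  have sn: "summable (\<lambda>k. norm (xs k))"
    by (rule summable_comparison_test'[OF geo, of 0]) (simp add: xs)
  then show "summable xs" by (rule summable_norm_cancel)
  have "norm (suminf xs) \<le> (\<Sum>k. norm (xs k))" by (rule summable_norm[OF sn])
  also have "\<dots> \<le> (\<Sum>k. c * (1/2::real) ^ k)" by (rule suminf_le[OF xs sn geo])
  also have "\<dots> = 2 * c" using suminf_geometric[of "1/2::real"] suminf_mult[OF summable_geometric, of "1/2::real" c]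
    by simp
  finally show "norm (suminf xs) \<le> 2 * c" .
qed

lemma successive_approximation_preimage:
  fixes f :: "'a::banach \<Rightarrow> 'b::real_normed_vector"
  assumes lin: "bounded_linear f" and K: "0 \<le> K"
    and approx: "\<And>y. y \<in> range f \<Longrightarrow> \<exists>x. norm x \<le> K * norm y \<and> norm (f x - y) \<le> norm y / 2"
    and y: "y \<in> range f"
  shows "\<exists>x. f x = y \<and> norm x \<le> 2 * K * norm y"
proof -
  interpret f: bounded_linear f by (rule lin)
  obtain g where g1: "\<And>y. y \<in> range f \<Longrightarrow> norm (g y) \<le> K * norm y"
    and g2: "\<And>y. y \<in> range f \<Longrightarrow> norm (f (g y) - y) \<le> norm y / 2"
    using approx by metis
  \<comment> \<open>the residuals \<open>rs k = y - f (g (rs 0) + \<dots> + g (rs (k - 1)))\<close> halve in each step\<close>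
  define rs where "rs = rec_nat y (\<lambda>_ r. r - f (g r))"
  have rs0: "rs 0 = y" and rsS: "\<And>k. rs (Suc k) = rs k - f (g (rs k))"
    unfolding rs_def by simp_all
  have rsR: "rs k \<in> range f" for k
  proof (induction k)
    case (Suc k)
    then obtain a where "rs k = f a" by blast
    then have "rs (Suc k) = f (a - g (rs k))" by (simp add: rsS f.diff)
    then show ?case by (rule range_eqI)
  qed (simp add: rs0 y)
  have rsn: "norm (rs k) \<le> norm y * (1/2) ^ k" for k
  proof (induction k)
    case (Suc k)
    have "norm (rs (Suc k)) \<le> norm (rs k) / 2"
      using g2[OF rsR[of k]] by (simp add: rsS norm_minus_commute)
    then show ?case using Suc.IH by simp
  qed (simp add: rs0)
  define xs where "xs k = g (rs k)" for k
  have xsn: "norm (xs k) \<le> K * norm y * (1/2) ^ k" for k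
    using g1[OF rsR[of k]] mult_left_mono[OF rsn[of k] K] unfolding xs_def by (simp add: mult.assoc)
  have "rs \<longlonglongrightarrow> 0"
  proof (rule Lim_null_comparison)
    show "\<forall>\<^sub>F k in sequentially. norm (rs k) \<le> norm y * (1/2) ^ k" using rsn by simp
    show "(\<lambda>k. norm y * (1/2::real) ^ k) \<longlonglongrightarrow> 0"
      using tendsto_mult_right_zero[OF LIMSEQ_power_zero[of "1/2::real"]] by simp
  qed
  then have "(\<lambda>k. rs k - rs (Suc k)) sums y" using telescope_sums' by (fastforce simp: rs0)
  then have "(\<lambda>k. f (xs k)) sums y" by (simp add: rsS xs_def)
  then have "f (suminf xs) = y"
    using f.suminf[OF summable_geometric_half_bound(1)[OF xsn]] by (simp add: sums_iff)
  moreover have "norm (suminf xs) \<le> 2 * K * norm y"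
    using summable_geometric_half_bound(2)[OF xsn] by (simp add: mult.assoc)
  ultimately show ?thesis by blast
qed

lemma open_mapping_closed_range:
  fixes f :: "'a::banach \<Rightarrow> 'b::banach"
  assumes lin: "bounded_linear f" and cl: "closed (range f)"
  shows "\<exists>C>0. \<forall>y\<in>range f. \<exists>x. f x = y \<and> norm x \<le> C * norm y"
proof -
  obtain K where K: "K > 0"
    and A: "\<And>y e. y \<in> range f \<Longrightarrow> e > 0 \<Longrightarrow> \<exists>x. norm x \<le> K * norm y \<and> norm (f x - y) < e"
    using closed_range_approximate_preimage[OF lin cl] by blast
  have "\<exists>x. norm x \<le> K * norm y \<and> norm (f x - y) \<le> norm y / 2" if "y \<in> range f" for y
  proof (cases "y = 0")
    case False
    then show ?thesis using A[OF that, of "norm y / 2"] by force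
  qed (use lin in \<open>auto intro!: exI[of _ 0] simp: linear_simps\<close>)
  then have "\<forall>y\<in>range f. \<exists>x. f x = y \<and> norm x \<le> 2 * K * norm y"
    using successive_approximation_preimage[OF lin] K by simp
  then show ?thesis using K by (intro exI[of _ "2 * K"]) simp
qed

instance chilbert_space \<subseteq> banach ..

lemma orthogonal_kernel_in_range_cadjoint:
  fixes g :: "'a::chilbert_space \<Rightarrow> 'b::chilbert_space"
  assumes g: "bounded_clinear g" and cl: "closed (range g)"
    and v: "\<And>y. g y = 0 \<Longrightarrow> cinner v y = 0"
  shows "v \<in> range (cadjoint g)"
proof -
  have gl: "bounded_linear g" using g unfolding bounded_clinear_def by simp
  obtain C where "C > 0" and "\<forall>z\<in>range g. \<exists>y. g y = z \<and> norm y \<le> C * norm z"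
    using open_mapping_closed_range[OF gl cl] by blast
  then obtain pre where pre1: "\<And>z. z \<in> range g \<Longrightarrow> g (pre z) = z"
    and pre2: "\<And>z. z \<in> range g \<Longrightarrow> norm (pre z) \<le> C * norm z"
    by metis
  \<comment> \<open>\<open>v\<close> induces a well-defined bounded functional on \<open>range g\<close>, since it vanishes on \<open>ker g\<close>\<close>
  define \<phi> where "\<phi> z = cinner v (pre z)" for z
  have phig: "\<phi> (g y) = cinner v y" for y
    using v[of "pre (g y) - y"] pre1[of "g y"] unfolding \<phi>_def
    by (simp add: bounded_clinear_diff[OF g] cinner_diff_right)
  have "csubspace (range g)"
    unfolding csubspace_def
    by (auto intro: range_eqI simp flip: bounded_clinear_zero[OF g] bounded_clinear_add[OF g]
        bounded_clinear_scaleC[OF g])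
  then have "\<exists>w\<in>range g. \<forall>z\<in>range g. \<phi> z = cinner w z"
  proof (rule Riesz_representation_csubspace[OF cl, where B = "norm v * C"])
    fix a assume "a \<in> range g"
    then have "cmod (\<phi> a) \<le> norm v * (C * norm a)"
      unfolding \<phi>_def by (meson Cauchy_Schwarz_cinner mult_left_mono norm_ge_zero order_trans pre2)
    then show "cmod (\<phi> a) \<le> norm v * C * norm a" by (simp add: mult.assoc)
  qed (auto simp: phig cinner_add_right cinner_scaleC_right
      simp flip: bounded_clinear_add[OF g] bounded_clinear_scaleC[OF g])
  then obtain w where w: "\<And>z. z \<in> range g \<Longrightarrow> \<phi> z = cinner w z" by blast
  have "cadjoint g w = v"
    by (rule cinner_ext_left) (metis cinner_cadjoint_left[OF g] phig rangeI w)
  then show ?thesis by blast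
qed

lemma cadjoint_exact:
  fixes f :: "'a::chilbert_space \<Rightarrow> 'b::chilbert_space" and g :: "'b \<Rightarrow> 'c::chilbert_space"
  assumes f: "bounded_clinear f" and g: "bounded_clinear g"
    and exact: "{y. g y = 0} \<subseteq> range f" and cl: "closed (range g)" and v: "cadjoint f v = 0"
  shows "v \<in> range (cadjoint g)"
proof (rule orthogonal_kernel_in_range_cadjoint[OF g cl])
  fix y assume "g y = 0"
  then obtain x where "y = f x" using exact by blast
  then show "cinner v y = 0" using v by (simp add: cinner_cadjoint_left[OF f, symmetric])
qed

section \<open>The Koszul complex and its adjoint\<close>

instantiation prod :: (complex_vector, complex_vector) complex_vector
begin

definition scaleC_prod_def: "scaleC c x = (scaleC c (fst x), scaleC c (snd x))"

instance
  by standard (simp_all add: scaleC_prod_def scaleR_prod_def scaleC_add_right scaleC_add_left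
      scaleC_scaleC scaleC_one scaleR_scaleC)

end

lemma scaleC_Pair [simp]: "scaleC c (a, b) = (scaleC c a, scaleC c b)"
  by (simp add: scaleC_prod_def)

instantiation prod :: (complex_inner, complex_inner) complex_inner
begin

definition cinner_prod_def: "cinner x y = cinner (fst x) (fst y) + cinner (snd x) (snd y)"

instance
proof
  fix x y z :: "'a \<times> 'b" and r :: complex
  show "cinner x y = cnj (cinner y x)"
    by (simp add: cinner_prod_def cinner_commute[of "fst x"] cinner_commute[of "snd x"])
  show "cinner x x = 0 \<longleftrightarrow> x = 0"
  proof
    assume "cinner x x = 0"
    then have "Re (cinner x x) = 0" by simp
    then have "(norm (fst x))\<^sup>2 + (norm (snd x))\<^sup>2 = 0"
      by (simp add: cinner_prod_def Re_cinner_self)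
    then show "x = 0" by (simp add: prod_eq_iff add_nonneg_eq_0_iff)
  qed (simp add: cinner_prod_def)
qed (simp_all add: cinner_prod_def scaleC_prod_def cinner_add_left cinner_scaleC_left algebra_simps cinner_self
    norm_prod_def)

end

lemma cinner_Pair [simp]: "cinner (a, b) (c, d) = cinner a c + cinner b d"
  by (simp add: cinner_prod_def)

instance prod :: (chilbert_space, chilbert_space) chilbert_space ..

definition koszul_d1 :: "('a \<Rightarrow> 'a) \<Rightarrow> ('a \<Rightarrow> 'a) \<Rightarrow> ('a \<Rightarrow> 'a) \<Rightarrow> 'a \<Rightarrow> 'a \<times> 'a \<times> 'a" where
  "koszul_d1 A1 A2 A3 x = (A1 x, A2 x, A3 x)"

definition koszul_d2 ::
    "('a::ab_group_add \<Rightarrow> 'a) \<Rightarrow> ('a \<Rightarrow> 'a) \<Rightarrow> ('a \<Rightarrow> 'a) \<Rightarrow> 'a \<times> 'a \<times> 'a \<Rightarrow> 'a \<times> 'a \<times> 'a" where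
  "koszul_d2 A1 A2 A3 = (\<lambda>(x1, x2, x3). (A1 x2 - A2 x1, A1 x3 - A3 x1, A2 x3 - A3 x2))"

definition koszul_d3 :: "('a::ab_group_add \<Rightarrow> 'a) \<Rightarrow> ('a \<Rightarrow> 'a) \<Rightarrow> ('a \<Rightarrow> 'a) \<Rightarrow> 'a \<times> 'a \<times> 'a \<Rightarrow> 'a" where
  "koszul_d3 A1 A2 A3 = (\<lambda>(y12, y13, y23). A1 y23 - A2 y13 + A3 y12)"

lemma koszul_exact_iff:
  "koszul_exact A1 A2 A3 \<longleftrightarrow>
     (\<forall>x. koszul_d1 A1 A2 A3 x = 0 \<longrightarrow> x = 0) \<and>
     {y. koszul_d2 A1 A2 A3 y = 0} \<subseteq> range (koszul_d1 A1 A2 A3) \<and>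
     {z. koszul_d3 A1 A2 A3 z = 0} \<subseteq> range (koszul_d2 A1 A2 A3) \<and>
     surj (koszul_d3 A1 A2 A3)"
  unfolding koszul_exact_def koszul_d1_def koszul_d2_def koszul_d3_def
  by (simp add: zero_prod_def surj_def image_iff split_paired_All split_paired_Ex subset_iff)

lemma koszul_d2_d1:
  "commuting_triple A1 A2 A3 \<Longrightarrow> koszul_d2 A1 A2 A3 (koszul_d1 A1 A2 A3 x) = 0"
  unfolding commuting_triple_def koszul_d1_def koszul_d2_def
  by (simp add: zero_prod_def) (metis comp_apply)

lemma koszul_d3_d2:
  assumes "bounded_clinear A1" "bounded_clinear A2" "bounded_clinear A3" "commuting_triple A1 A2 A3"
  shows "koszul_d3 A1 A2 A3 (koszul_d2 A1 A2 A3 x) = 0"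
  using assms unfolding commuting_triple_def koszul_d2_def koszul_d3_def
  by (auto simp: bounded_clinear_diff fun_eq_iff split: prod.split)

lemma bounded_clinear_koszul:
  assumes "bounded_clinear A1" "bounded_clinear A2" "bounded_clinear A3"
  shows "bounded_clinear (koszul_d1 A1 A2 A3)" "bounded_clinear (koszul_d2 A1 A2 A3)"
    "bounded_clinear (koszul_d3 A1 A2 A3)"
proof -
  have l: "bounded_linear A1" "bounded_linear A2" "bounded_linear A3"
    using assms unfolding bounded_clinear_def by simp_all
  note lin = bounded_linear_compose[OF l(1)] bounded_linear_compose[OF l(2)]
    bounded_linear_compose[OF l(3)] bounded_linear_compose[OF bounded_linear_fst]
    bounded_linear_compose[OF bounded_linear_snd] bounded_linear_fst bounded_linear_snd
  note sc = bounded_clinear_scaleC[OF assms(1)] bounded_clinear_scaleC[OF assms(2)]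
    bounded_clinear_scaleC[OF assms(3)] scaleC_diff_right scaleC_add_right
  have "bounded_linear (koszul_d1 A1 A2 A3)"
    unfolding koszul_d1_def[abs_def] by (intro bounded_linear_Pair l)
  then show "bounded_clinear (koszul_d1 A1 A2 A3)"
    unfolding bounded_clinear_def by (simp add: koszul_d1_def sc)
  have "bounded_linear (koszul_d2 A1 A2 A3)"
    unfolding koszul_d2_def case_prod_beta by (intro bounded_linear_Pair bounded_linear_sub lin)
  then show "bounded_clinear (koszul_d2 A1 A2 A3)"
    unfolding bounded_clinear_def by (simp add: koszul_d2_def sc split: prod.split)
  have "bounded_linear (koszul_d3 A1 A2 A3)"
    unfolding koszul_d3_def case_prod_beta by (intro bounded_linear_add bounded_linear_sub lin)
  then show "bounded_clinear (koszul_d3 A1 A2 A3)"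
    unfolding bounded_clinear_def by (simp add: koszul_d3_def sc split: prod.split)
qed

lemma closed_kernel: "bounded_linear f \<Longrightarrow> closed {x. f x = 0}"
  by (simp add: closed_Collect_eq linear_continuous_on)

context
  fixes A1 A2 A3 :: "'a::chilbert_space \<Rightarrow> 'a"
  assumes b1: "bounded_clinear A1" and b2: "bounded_clinear A2" and b3: "bounded_clinear A3"
begin

lemma cadjoint_koszul_d1:
  "cadjoint (koszul_d1 A1 A2 A3) = (\<lambda>(a, b, c). cadjoint A1 a + cadjoint A2 b + cadjoint A3 c)"
  by (rule cadjoint_eq)
    (simp add: koszul_d1_def cinner_add_right cinner_cadjoint_right b1 b2 b3 split: prod.split)

lemma cadjoint_koszul_d2:
  "cadjoint (koszul_d2 A1 A2 A3) =
     (\<lambda>(w12, w13, w23). (- cadjoint A2 w12 - cadjoint A3 w13, cadjoint A1 w12 - cadjoint A3 w23,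
                         cadjoint A1 w13 + cadjoint A2 w23))"
  by (rule cadjoint_eq)
    (simp add: koszul_d2_def cinner_add_right cinner_diff_right cinner_diff_left cinner_minus_right
      cinner_cadjoint_right b1 b2 b3 algebra_simps split: prod.split)

lemma cadjoint_koszul_d3:
  "cadjoint (koszul_d3 A1 A2 A3) = (\<lambda>y. (cadjoint A3 y, - cadjoint A2 y, cadjoint A1 y))"
  by (rule cadjoint_eq)
    (simp add: koszul_d3_def cinner_add_left cinner_diff_left cinner_minus_right
      cinner_cadjoint_right b1 b2 b3 algebra_simps split: prod.split)

lemma closed_range_koszul_exact:
  assumes c: "commuting_triple A1 A2 A3" and ex: "koszul_exact A1 A2 A3"
  shows "closed (range (koszul_d1 A1 A2 A3))" and "closed (range (koszul_d2 A1 A2 A3))"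
proof -
  note bl = bounded_clinear_koszul[OF b1 b2 b3, unfolded bounded_clinear_def]
  have "range (koszul_d1 A1 A2 A3) = {y. koszul_d2 A1 A2 A3 y = 0}"
    using ex koszul_d2_d1[OF c] unfolding koszul_exact_iff by auto
  then show "closed (range (koszul_d1 A1 A2 A3))" using bl(2) closed_kernel by auto
  have "range (koszul_d2 A1 A2 A3) = {z. koszul_d3 A1 A2 A3 z = 0}"
    using ex koszul_d3_d2[OF b1 b2 b3 c] unfolding koszul_exact_iff by auto
  then show "closed (range (koszul_d2 A1 A2 A3))" using bl(3) closed_kernel by auto
qed

lemma koszul_exact_cadjoint:
  assumes c: "commuting_triple A1 A2 A3" and ex: "koszul_exact A1 A2 A3"
  shows "koszul_exact (cadjoint A1) (cadjoint A2) (cadjoint A3)"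
proof -
  let ?d1 = "koszul_d1 A1 A2 A3" and ?d2 = "koszul_d2 A1 A2 A3" and ?d3 = "koszul_d3 A1 A2 A3"
  note bd = bounded_clinear_koszul[OF b1 b2 b3]
  note cl = closed_range_koszul_exact[OF c ex]
  have inj: "\<And>x. ?d1 x = 0 \<Longrightarrow> x = 0" and ex2: "{y. ?d2 y = 0} \<subseteq> range ?d1"
    and ex3: "{z. ?d3 z = 0} \<subseteq> range ?d2" and surj: "surj ?d3"
    using ex unfolding koszul_exact_iff by auto
  note adj = cadjoint_koszul_d1 cadjoint_koszul_d2 cadjoint_koszul_d3
  note lin = bounded_clinear_minus bounded_clinear_cadjoint b1 b2 b3
  show ?thesis
    unfolding koszul_exact_def
  proof (intro conjI allI impI)
    fix x assume "cadjoint A1 x = 0 \<and> cadjoint A2 x = 0 \<and> cadjoint A3 x = 0"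
    then have "cadjoint ?d3 x = 0" by (simp add: adj zero_prod_def)
    then show "x = 0" by (rule cadjoint_surj_injective[OF bd(3) surj])
  next
    fix x1 x2 x3
    assume "cadjoint A1 x2 - cadjoint A2 x1 = 0 \<and> cadjoint A1 x3 - cadjoint A3 x1 = 0 \<and>
      cadjoint A2 x3 - cadjoint A3 x2 = 0"
    then have "cadjoint ?d2 (x3, - x2, x1) = 0" by (simp add: adj lin algebra_simps zero_prod_def)
    then have "(x3, - x2, x1) \<in> range (cadjoint ?d3)" using cadjoint_exact[OF bd(2,3) ex3] surj by simp
    then show "\<exists>x. x1 = cadjoint A1 x \<and> x2 = cadjoint A2 x \<and> x3 = cadjoint A3 x"
      by (auto simp: adj)
  next
    fix y12 y13 y23
    assume "cadjoint A1 y23 - cadjoint A2 y13 + cadjoint A3 y12 = 0"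
    then have "cadjoint ?d1 (y23, - y13, y12) = 0" by (simp add: adj lin)
    then have "(y23, - y13, y12) \<in> range (cadjoint ?d2)" by (rule cadjoint_exact[OF bd(1,2) ex2 cl(2)])
    then obtain w12 w13 w23 where "- cadjoint A2 w12 - cadjoint A3 w13 = y23"
      "cadjoint A1 w12 - cadjoint A3 w23 = - y13" "cadjoint A1 w13 + cadjoint A2 w23 = y12"
      by (auto simp: adj)
    then show "\<exists>x1 x2 x3. y12 = cadjoint A1 x2 - cadjoint A2 x1 \<and>
        y13 = cadjoint A1 x3 - cadjoint A3 x1 \<and> y23 = cadjoint A2 x3 - cadjoint A3 x2"
      by (intro exI[of _ "- w23"] exI[of _ w13] exI[of _ "- w12"]) (auto simp: lin algebra_simps)
  next
    fix y
    have "y \<in> range (cadjoint ?d1)"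
      using orthogonal_kernel_in_range_cadjoint[OF bd(1) cl(1)] inj by (metis cinner_zero_right)
    then obtain a b c where "y = cadjoint A1 a + cadjoint A2 b + cadjoint A3 c"
      by (auto simp: adj)
    then show "\<exists>y12 y13 y23. y = cadjoint A1 y23 - cadjoint A2 y13 + cadjoint A3 y12"
      by (intro exI[of _ c] exI[of _ "- b"] exI[of _ a]) (simp add: lin)
  qed
qed

end

section \<open>Adjoints of \<open>\<P>\<close>-unitaries\<close>

lemma bP_cnj: "(a, s, p) \<in> bP \<Longrightarrow> (cnj a, cnj s, cnj p) \<in> bP"
  unfolding bP_def bGamma_def
  by clarsimp (metis complex_cnj_add complex_cnj_mult complex_mod_cnj)

lemma commuting_triple_shift:
  assumes "bounded_clinear A1" "bounded_clinear A2" "bounded_clinear A3" "commuting_triple A1 A2 A3"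
  shows "commuting_triple (\<lambda>x. A1 x - scaleC z1 x) (\<lambda>x. A2 x - scaleC z2 x) (\<lambda>x. A3 x - scaleC z3 x)"
  using assms unfolding commuting_triple_def
  by (auto simp: fun_eq_iff bounded_clinear_diff bounded_clinear_scaleC scaleC_diff_right scaleC_scaleC
      mult.commute algebra_simps dest!: fun_cong)

lemma commuting_triple_cadjoint:
  fixes A1 A2 A3 :: "'a::chilbert_space \<Rightarrow> 'a"
  assumes "bounded_clinear A1" "bounded_clinear A2" "bounded_clinear A3" "commuting_triple A1 A2 A3"
  shows "commuting_triple (cadjoint A1) (cadjoint A2) (cadjoint A3)"
  using assms unfolding commuting_triple_def by (metis cadjoint_comp)

lemma normal_op_cadjoint:
  fixes T :: "'a::chilbert_space \<Rightarrow> 'a"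
  assumes "bounded_clinear T" and "normal_op T"
  shows "normal_op (cadjoint T)"
  using assms unfolding normal_op_def by (simp add: cadjoint_cadjoint)

lemma taylor_spectrum_cadjoint_cnj:
  fixes A1 A2 A3 :: "'a::chilbert_space \<Rightarrow> 'a"
  assumes b: "bounded_clinear A1" "bounded_clinear A2" "bounded_clinear A3"
    and c: "commuting_triple A1 A2 A3"
    and z: "(z1, z2, z3) \<in> taylor_spectrum (cadjoint A1) (cadjoint A2) (cadjoint A3)"
  shows "(cnj z1, cnj z2, cnj z3) \<in> taylor_spectrum A1 A2 A3"
proof (rule ccontr)
  assume "(cnj z1, cnj z2, cnj z3) \<notin> taylor_spectrum A1 A2 A3"
  then have "koszul_exact (\<lambda>x. A1 x - scaleC (cnj z1) x) (\<lambda>x. A2 x - scaleC (cnj z2) x)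
                          (\<lambda>x. A3 x - scaleC (cnj z3) x)"
    unfolding taylor_spectrum_def by simp
  then have "koszul_exact (cadjoint (\<lambda>x. A1 x - scaleC (cnj z1) x))
      (cadjoint (\<lambda>x. A2 x - scaleC (cnj z2) x)) (cadjoint (\<lambda>x. A3 x - scaleC (cnj z3) x))"
    by (intro koszul_exact_cadjoint bounded_clinear_shift commuting_triple_shift b c)
  then show False using z by (simp add: taylor_spectrum_def cadjoint_shift b)
qed

lemma P_unitary_cadjoint:
  fixes N1 N2 N3 :: "'a::chilbert_space \<Rightarrow> 'a"
  assumes "P_unitary N1 N2 N3"
  shows "P_unitary (cadjoint N1) (cadjoint N2) (cadjoint N3)"
proof -
  have b: "bounded_clinear N1" "bounded_clinear N2" "bounded_clinear N3"
    and c: "commuting_triple N1 N2 N3" and sp: "taylor_spectrum N1 N2 N3 \<subseteq> bP"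
    using assms unfolding P_unitary_def by auto
  have "taylor_spectrum (cadjoint N1) (cadjoint N2) (cadjoint N3) \<subseteq> bP"
  proof (clarify)
    fix z1 z2 z3 assume "(z1, z2, z3) \<in> taylor_spectrum (cadjoint N1) (cadjoint N2) (cadjoint N3)"
    then have "(cnj z1, cnj z2, cnj z3) \<in> bP" using taylor_spectrum_cadjoint_cnj[OF b c] sp by blast
    then show "(z1, z2, z3) \<in> bP" using bP_cnj by fastforce
  qed
  then show ?thesis
    using assms b commuting_triple_cadjoint[OF b c]
    unfolding P_unitary_def by (simp add: bounded_clinear_cadjoint normal_op_cadjoint)
qed

lemma P_isometry_in_self:
  fixes N1 N2 N3 :: "'a::chilbert_space \<Rightarrow> 'a"
  assumes "P_unitary N1 N2 N3"
  shows "P_isometry_in TYPE('a) N1 N2 N3"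
  unfolding P_isometry_in_def
  by (rule exI[of _ id], rule exI[of _ N1], rule exI[of _ N2], rule exI[of _ N3])
    (use assms bounded_clinear_id in auto)

section \<open>Restrictions of normal operators\<close>

lemma norm_isometry:
  assumes "\<And>x y. cinner (V x) (V y) = cinner x y"
  shows "norm (V x) = norm x"
proof -
  have "(norm (V x))\<^sup>2 = (norm x)\<^sup>2" using assms[of x x] by (simp flip: Re_cinner_self)
  then show ?thesis by (simp add: power2_eq_iff_nonneg)
qed

lemma cadjoint_isometry_left_inverse:
  fixes V :: "'a::chilbert_space \<Rightarrow> 'b::chilbert_space"
  assumes "bounded_clinear V" and "\<And>x y. cinner (V x) (V y) = cinner x y"
  shows "cadjoint V (V x) = x"
  by (rule cinner_ext_right) (simp add: cinner_cadjoint_right[OF assms(1), symmetric] assms(2))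

lemma norm_cadjoint_isometry_le:
  fixes V :: "'a::chilbert_space \<Rightarrow> 'b::chilbert_space"
  assumes V: "bounded_clinear V" and iso: "\<And>x y. cinner (V x) (V y) = cinner x y"
  shows "norm (cadjoint V w) \<le> norm w"
proof -
  let ?u = "cadjoint V w"
  have "(norm ?u)\<^sup>2 = Re (cinner (V ?u) w)" by (simp add: cinner_cadjoint_right[OF V] Re_cinner_self)
  also have "\<dots> \<le> norm ?u * norm w" using Re_cinner_le_norm[of "V ?u" w] by (simp add: norm_isometry[of V, OF iso])
  finally show ?thesis by (cases "norm ?u = 0") (auto simp: power2_eq_square)
qed

lemma norm_cadjoint_normal:
  fixes U :: "'a::chilbert_space \<Rightarrow> 'a"
  assumes U: "bounded_clinear U" and n: "normal_op U"
  shows "norm (cadjoint U w) = norm (U w)"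
proof -
  have "cinner (cadjoint U w) (cadjoint U w) = cinner (U (cadjoint U w)) w"
    by (simp add: cinner_cadjoint_right[OF U])
  also have "\<dots> = cinner (cadjoint U (U w)) w"
    using n unfolding normal_op_def by (metis comp_apply)
  also have "\<dots> = cinner (U w) (U w)" by (simp add: cinner_cadjoint_left[OF U])
  finally have "cinner (cadjoint U w) (cadjoint U w) = cinner (U w) (U w)" .
  then have "(norm (cadjoint U w))\<^sup>2 = (norm (U w))\<^sup>2" by (simp flip: Re_cinner_self)
  then show ?thesis by (simp add: power2_eq_iff_nonneg)
qed

lemma norm_cadjoint_le_restriction_normal:
  fixes T :: "'a::chilbert_space \<Rightarrow> 'a" and V :: "'a \<Rightarrow> 'b::chilbert_space" and U :: "'b \<Rightarrow> 'b"
  assumes V: "bounded_clinear V" and iso: "\<And>x y. cinner (V x) (V y) = cinner x y"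
    and U: "bounded_clinear U" and n: "normal_op U" and int: "\<And>x. U (V x) = V (T x)"
  shows "norm (cadjoint T x) \<le> norm (T x)"
proof -
  have "cadjoint T = (\<lambda>y. cadjoint V (cadjoint U (V y)))"
  proof (rule cadjoint_eq)
    fix a b
    have "cinner (T a) b = cinner (U (V a)) (V b)" by (simp add: iso int)
    then show "cinner (T a) b = cinner a (cadjoint V (cadjoint U (V b)))"
      by (simp add: cinner_cadjoint_right[OF U] cinner_cadjoint_right[OF V])
  qed
  then have "norm (cadjoint T x) \<le> norm (cadjoint U (V x))"
    using norm_cadjoint_isometry_le[OF V iso] by simp
  also have "\<dots> = norm (T x)" by (simp add: norm_cadjoint_normal[OF U n] int norm_isometry[of V, OF iso])
  finally show ?thesis .
qed

text \<open>The proof polarizes the quadratic form of \<open>T T\<^sup>* - T\<^sup>* T\<close>, which vanishes.\<close>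

lemma normal_opI_norm_cadjoint:
  fixes T :: "'a::chilbert_space \<Rightarrow> 'a"
  assumes T: "bounded_clinear T" and eq: "\<And>x. norm (cadjoint T x) = norm (T x)"
  shows "normal_op T"
proof -
  let ?S = "cadjoint T"
  have S: "bounded_clinear ?S" by (rule bounded_clinear_cadjoint[OF T])
  define D where "D x = T (?S x) - ?S (T x)" for x
  have Dadd: "D (x + y) = D x + D y" for x y
    unfolding D_def by (simp add: bounded_clinear_add[OF T] bounded_clinear_add[OF S] algebra_simps)
  have Dsc: "D (scaleC c x) = scaleC c (D x)" for c x
    unfolding D_def by (simp add: bounded_clinear_scaleC[OF T] bounded_clinear_scaleC[OF S] scaleC_diff_right)
  have q: "cinner x (D x) = 0" for x
    using cinner_cadjoint_left[OF T, of x "?S x"] cinner_cadjoint_right[OF T, of x "T x"]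
    unfolding D_def by (simp add: cinner_diff_right cinner_self eq)
  have sym: "cinner x (D y) + cinner y (D x) = 0" for x y
    using q[of "x + y"] by (simp add: Dadd cinner_add_left cinner_add_right q add.commute)
  have asym: "cinner x (D y) - cinner y (D x) = 0" for x y
  proof -
    have "\<i> * (cinner x (D y) - cinner y (D x)) = cinner x (D (scaleC \<i> y)) + cinner (scaleC \<i> y) (D x)"
      by (simp add: Dsc cinner_scaleC_left cinner_scaleC_right algebra_simps)
    then show ?thesis by (simp add: sym)
  qed
  have "D y = 0" for y
    by (rule cinner_eq_zero_all) (use sym[of _ y] asym[of _ y] in simp)
  then show ?thesis unfolding normal_op_def D_def by (auto simp: fun_eq_iff)
qed

text \<open>It suffices that \<open>U\<^sup>* V = V T\<^sup>*\<close>: both sides have the same norm, and their inner product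
  is that norm squared.\<close>

lemma cadjoint_isometry_intertwines_normal:
  fixes T :: "'a::chilbert_space \<Rightarrow> 'a" and V :: "'a \<Rightarrow> 'b::chilbert_space" and U :: "'b \<Rightarrow> 'b"
  assumes T: "bounded_clinear T" "normal_op T"
    and V: "bounded_clinear V" and iso: "\<And>x y. cinner (V x) (V y) = cinner x y"
    and U: "bounded_clinear U" "normal_op U" and int: "\<And>x. U (V x) = V (T x)"
  shows "cadjoint V (U w) = T (cadjoint V w)"
proof -
  have key: "cadjoint U (V x) = V (cadjoint T x)" for x
  proof -
    let ?a = "cadjoint U (V x)" and ?b = "V (cadjoint T x)"
    have na: "norm ?a = norm (T x)" and nb: "norm ?b = norm (T x)"
      by (simp_all add: norm_cadjoint_normal U T int norm_isometry[of V, OF iso])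
    have "cinner ?a ?b = cinner x (T (cadjoint T x))"
      by (simp add: cinner_cadjoint_left[OF U(1)] int iso)
    also have "\<dots> = cinner (cadjoint T x) (cadjoint T x)" by (simp add: cinner_cadjoint_left[OF T(1)])
    also have "\<dots> = complex_of_real ((norm (T x))\<^sup>2)" by (simp add: cinner_self norm_cadjoint_normal T)
    finally have "(norm (?a - ?b))\<^sup>2 = 0" by (simp add: norm_diff_sq na nb)
    then show ?thesis by simp
  qed
  show ?thesis
    by (rule cinner_ext_left)
      (simp add: cinner_cadjoint_left[OF V] cinner_cadjoint_right[OF U(1)] key
        cinner_cadjoint_right[OF T(1)])
qed

lemma koszul_exact_retract:
  fixes A1 A2 A3 :: "'b::chilbert_space \<Rightarrow> 'b" and B1 B2 B3 :: "'a::chilbert_space \<Rightarrow> 'a"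
    and V :: "'a \<Rightarrow> 'b" and W :: "'b \<Rightarrow> 'a"
  assumes V: "bounded_clinear V" and W: "bounded_clinear W" and WV: "\<And>x. W (V x) = x"
    and iV: "\<And>x. A1 (V x) = V (B1 x)" "\<And>x. A2 (V x) = V (B2 x)" "\<And>x. A3 (V x) = V (B3 x)"
    and iW: "\<And>w. W (A1 w) = B1 (W w)" "\<And>w. W (A2 w) = B2 (W w)" "\<And>w. W (A3 w) = B3 (W w)"
    and ex: "koszul_exact A1 A2 A3"
  shows "koszul_exact B1 B2 B3"
proof -
  note Vd = bounded_clinear_diff[OF V] bounded_clinear_add[OF V] bounded_clinear_zero[OF V]
  note Wd = bounded_clinear_diff[OF W] bounded_clinear_add[OF W] bounded_clinear_zero[OF W]
  have e1: "\<And>x. A1 x = 0 \<Longrightarrow> A2 x = 0 \<Longrightarrow> A3 x = 0 \<Longrightarrow> x = 0"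
    and e2: "\<And>x1 x2 x3. A1 x2 - A2 x1 = 0 \<Longrightarrow> A1 x3 - A3 x1 = 0 \<Longrightarrow> A2 x3 - A3 x2 = 0 \<Longrightarrow>
        (\<exists>x. x1 = A1 x \<and> x2 = A2 x \<and> x3 = A3 x)"
    and e3: "\<And>y12 y13 y23. A1 y23 - A2 y13 + A3 y12 = 0 \<Longrightarrow>
        (\<exists>x1 x2 x3. y12 = A1 x2 - A2 x1 \<and> y13 = A1 x3 - A3 x1 \<and> y23 = A2 x3 - A3 x2)"
    and e4: "\<And>y. \<exists>y12 y13 y23. y = A1 y23 - A2 y13 + A3 y12"
    using ex unfolding koszul_exact_def by blast+
  show ?thesis
    unfolding koszul_exact_def
  proof (intro conjI allI impI)
    fix x assume "B1 x = 0 \<and> B2 x = 0 \<and> B3 x = 0"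
    then have "V x = 0" using e1 by (simp add: iV Vd)
    then show "x = 0" using WV[of x] by (simp add: Wd)
  next
    fix x1 x2 x3 assume "B1 x2 - B2 x1 = 0 \<and> B1 x3 - B3 x1 = 0 \<and> B2 x3 - B3 x2 = 0"
    then have "A1 (V x2) - A2 (V x1) = 0 \<and> A1 (V x3) - A3 (V x1) = 0 \<and> A2 (V x3) - A3 (V x2) = 0"
      by (simp add: iV Vd(3) flip: Vd(1))
    then obtain w where "A1 w = V x1" "A2 w = V x2" "A3 w = V x3" using e2 by metis
    then show "\<exists>x. x1 = B1 x \<and> x2 = B2 x \<and> x3 = B3 x"
      by (intro exI[of _ "W w"]) (simp add: WV flip: iW)
  next
    fix y12 y13 y23 assume "B1 y23 - B2 y13 + B3 y12 = 0"
    then have "A1 (V y23) - A2 (V y13) + A3 (V y12) = 0" by (simp add: iV Vd(3) flip: Vd(1,2))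
    then obtain x1 x2 x3 where "A1 x2 - A2 x1 = V y12" "A1 x3 - A3 x1 = V y13" "A2 x3 - A3 x2 = V y23"
      using e3 by metis
    then show "\<exists>x1 x2 x3. y12 = B1 x2 - B2 x1 \<and> y13 = B1 x3 - B3 x1 \<and> y23 = B2 x3 - B3 x2"
      by (intro exI[of _ "W x1"] exI[of _ "W x2"] exI[of _ "W x3"]) (simp add: WV flip: iW Wd(1))
  next
    fix y
    obtain y12 y13 y23 where "A1 y23 - A2 y13 + A3 y12 = V y" using e4 by metis
    then show "\<exists>y12 y13 y23. y = B1 y23 - B2 y13 + B3 y12"
      by (intro exI[of _ "W y12"] exI[of _ "W y13"] exI[of _ "W y23"]) (simp add: WV flip: iW Wd(1,2))
  qed
qed

lemma taylor_spectrum_subset_retract: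
  fixes A1 A2 A3 :: "'b::chilbert_space \<Rightarrow> 'b" and B1 B2 B3 :: "'a::chilbert_space \<Rightarrow> 'a"
    and V :: "'a \<Rightarrow> 'b" and W :: "'b \<Rightarrow> 'a"
  assumes V: "bounded_clinear V" and W: "bounded_clinear W" and WV: "\<And>x. W (V x) = x"
    and iV: "\<And>x. A1 (V x) = V (B1 x)" "\<And>x. A2 (V x) = V (B2 x)" "\<And>x. A3 (V x) = V (B3 x)"
    and iW: "\<And>w. W (A1 w) = B1 (W w)" "\<And>w. W (A2 w) = B2 (W w)" "\<And>w. W (A3 w) = B3 (W w)"
  shows "taylor_spectrum B1 B2 B3 \<subseteq> taylor_spectrum A1 A2 A3"
proof (clarify)
  fix z1 z2 z3
  assume "(z1, z2, z3) \<in> taylor_spectrum B1 B2 B3"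
  moreover have "koszul_exact (\<lambda>x. B1 x - scaleC z1 x) (\<lambda>x. B2 x - scaleC z2 x) (\<lambda>x. B3 x - scaleC z3 x)"
    if "koszul_exact (\<lambda>w. A1 w - scaleC z1 w) (\<lambda>w. A2 w - scaleC z2 w) (\<lambda>w. A3 w - scaleC z3 w)"
    by (rule koszul_exact_retract[OF V W WV _ _ _ _ _ _ that])
      (simp_all add: iV iW bounded_clinear_diff[OF V] bounded_clinear_scaleC[OF V]
        bounded_clinear_diff[OF W] bounded_clinear_scaleC[OF W])
  ultimately show "(z1, z2, z3) \<in> taylor_spectrum A1 A2 A3"
    unfolding taylor_spectrum_def by auto
qed

lemma normal_op_if_restrictions_normal:
  fixes T :: "'a::chilbert_space \<Rightarrow> 'a" and V :: "'a \<Rightarrow> 'b::chilbert_space" and U :: "'b \<Rightarrow> 'b"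
    and V' :: "'a \<Rightarrow> 'c::chilbert_space" and U' :: "'c \<Rightarrow> 'c"
  assumes T: "bounded_clinear T"
    and "bounded_clinear V" "\<And>x y. cinner (V x) (V y) = cinner x y"
      "bounded_clinear U" "normal_op U" "\<And>x. U (V x) = V (T x)"
    and "bounded_clinear V'" "\<And>x y. cinner (V' x) (V' y) = cinner x y"
      "bounded_clinear U'" "normal_op U'" "\<And>x. U' (V' x) = V' (cadjoint T x)"
  shows "normal_op T"
proof (rule normal_opI_norm_cadjoint[OF T])
  fix x
  have "norm (cadjoint T x) \<le> norm (T x)"
    by (rule norm_cadjoint_le_restriction_normal[OF assms(2-6)])
  moreover have "norm (cadjoint (cadjoint T) x) \<le> norm (cadjoint T x)"
    by (rule norm_cadjoint_le_restriction_normal[OF assms(7-11)])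
  ultimately show "norm (cadjoint T x) = norm (T x)" by (simp add: cadjoint_cadjoint[OF T])
qed

lemma normal_op_if_P_isometry_in_pair:
  fixes N1 N2 N3 :: "'a::chilbert_space \<Rightarrow> 'a"
  assumes b: "bounded_clinear N1" "bounded_clinear N2" "bounded_clinear N3"
    and "P_isometry_in TYPE('b::chilbert_space) N1 N2 N3"
    and "P_isometry_in TYPE('c::chilbert_space) (cadjoint N1) (cadjoint N2) (cadjoint N3)"
  shows "normal_op N1 \<and> normal_op N2 \<and> normal_op N3"
proof -
  obtain V :: "'a \<Rightarrow> 'b" and U1 U2 U3 where V: "bounded_clinear V"
    and iso: "\<And>x y. cinner (V x) (V y) = cinner x y" and U: "P_unitary U1 U2 U3"
    and i: "\<And>x. U1 (V x) = V (N1 x)" "\<And>x. U2 (V x) = V (N2 x)" "\<And>x. U3 (V x) = V (N3 x)"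
    using assms(4) unfolding P_isometry_in_def by blast
  obtain V' :: "'a \<Rightarrow> 'c" and U1' U2' U3' where V': "bounded_clinear V'"
    and iso': "\<And>x y. cinner (V' x) (V' y) = cinner x y" and U': "P_unitary U1' U2' U3'"
    and i': "\<And>x. U1' (V' x) = V' (cadjoint N1 x)" "\<And>x. U2' (V' x) = V' (cadjoint N2 x)"
      "\<And>x. U3' (V' x) = V' (cadjoint N3 x)"
    using assms(5) unfolding P_isometry_in_def by blast
  have u: "bounded_clinear U1" "bounded_clinear U2" "bounded_clinear U3"
      "normal_op U1" "normal_op U2" "normal_op U3"
    and u': "bounded_clinear U1'" "bounded_clinear U2'" "bounded_clinear U3'"
      "normal_op U1'" "normal_op U2'" "normal_op U3'"
    using U U' unfolding P_unitary_def by simp_all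
  note r = normal_op_if_restrictions_normal[OF _ V iso _ _ _ V' iso']
  show ?thesis
    using r[OF b(1) u(1,4) i(1) u'(1,4) i'(1)] r[OF b(2) u(2,5) i(2) u'(2,5) i'(2)]
      r[OF b(3) u(3,6) i(3) u'(3,6) i'(3)] by blast
qed

lemma taylor_spectrum_normal_P_isometry_in:
  fixes N1 N2 N3 :: "'a::chilbert_space \<Rightarrow> 'a"
  assumes b: "bounded_clinear N1" "bounded_clinear N2" "bounded_clinear N3"
    and n: "normal_op N1" "normal_op N2" "normal_op N3"
    and "P_isometry_in TYPE('b::chilbert_space) N1 N2 N3"
  shows "taylor_spectrum N1 N2 N3 \<subseteq> bP"
proof -
  obtain V :: "'a \<Rightarrow> 'b" and U1 U2 U3 where V: "bounded_clinear V"
    and iso: "\<And>x y. cinner (V x) (V y) = cinner x y" and U: "P_unitary U1 U2 U3"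
    and i: "\<And>x. U1 (V x) = V (N1 x)" "\<And>x. U2 (V x) = V (N2 x)" "\<And>x. U3 (V x) = V (N3 x)"
    using assms(7) unfolding P_isometry_in_def by blast
  have u: "bounded_clinear U1" "bounded_clinear U2" "bounded_clinear U3"
      "normal_op U1" "normal_op U2" "normal_op U3"
    using U unfolding P_unitary_def by simp_all
  note j = cadjoint_isometry_intertwines_normal[OF _ _ V iso]
  have "taylor_spectrum N1 N2 N3 \<subseteq> taylor_spectrum U1 U2 U3"
    by (rule taylor_spectrum_subset_retract[of V "cadjoint V" U1 N1 U2 N2 U3 N3, OF V bounded_clinear_cadjoint[OF V]
          cadjoint_isometry_left_inverse[OF V iso] i j[OF b(1) n(1) u(1,4) i(1)]
          j[OF b(2) n(2) u(2,5) i(2)] j[OF b(3) n(3) u(3,6) i(3)]])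
  also have "\<dots> \<subseteq> bP" using U unfolding P_unitary_def by blast
  finally show ?thesis .
qed

theorem mainTheorem16:
  fixes N1 N2 N3 :: "'a::chilbert_space \<Rightarrow> 'a"
  assumes "bounded_clinear N1" and "bounded_clinear N2" and "bounded_clinear N3"
    and "commuting_triple N1 N2 N3"
  shows "(P_unitary N1 N2 N3 \<longrightarrow>
            P_isometry_in TYPE('a) N1 N2 N3 \<and>
            P_isometry_in TYPE('a) (cadjoint N1) (cadjoint N2) (cadjoint N3)) \<and>
         (P_isometry_in TYPE('b::chilbert_space) N1 N2 N3 \<and>
          P_isometry_in TYPE('c::chilbert_space) (cadjoint N1) (cadjoint N2) (cadjoint N3) \<longrightarrow>
            P_unitary N1 N2 N3)"
proof (intro conjI impI)
  assume "P_unitary N1 N2 N3"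
  then show "P_isometry_in TYPE('a) N1 N2 N3"
    and "P_isometry_in TYPE('a) (cadjoint N1) (cadjoint N2) (cadjoint N3)"
    by (simp_all add: P_isometry_in_self P_unitary_cadjoint)
next
  assume iso: "P_isometry_in TYPE('b) N1 N2 N3 \<and>
    P_isometry_in TYPE('c) (cadjoint N1) (cadjoint N2) (cadjoint N3)"
  then have n: "normal_op N1" "normal_op N2" "normal_op N3"
    using normal_op_if_P_isometry_in_pair[OF assms(1-3)] by blast+
  then have "taylor_spectrum N1 N2 N3 \<subseteq> bP"
    using taylor_spectrum_normal_P_isometry_in[OF assms(1-3) n] iso by blast
  then show "P_unitary N1 N2 N3" using assms n unfolding P_unitary_def by simp
qed

end
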